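(* Let $n\ge2$ and let $\lambda_1>\lambda_2>\dots>\lambda_n$ be distinct real numbers, and let $\mu_1>\dots>\mu_{n-1}$ be the critical points of $q(x)=\prod_{j=1}^n(x-\lambda_j)$ (so $\lambda_k>\mu_k>\lambda_{k+1}$). Define the $(n-1)\times n$ matrix $W$ by $$W_{kj}:=\frac{(\mu_k-\lambda_j)^{-2}}{\sum_{i=1}^n(\mu_k-\lambda_i)^{-2}}.$$ Then each $\mu_k$ is a smooth function of $(\lambda_1,\dots,\lambda_n)$ on the set of strictly decreasing tuples, with $\partial\mu_k/\partial\lambda_j=W_{kj}>0$ for all $k,j$; moreover each row of $W$ sums to $1$, each column of $W$ sums to $\frac{n-1}{n}$, and $\mu_k=\sum_{j=1}^n W_{kj}\lambda_j$ for every $k=1,\dots,n-1$. *)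

theory Defs
  imports "HOL-Analysis.Analysis" "HOL-Computational_Algebra.Polynomial"
begin

text \<open>Coinductive, so that
all iterated partial derivatives exist.\<close>
coinductive smooth_on :: "'a::euclidean_space set \<Rightarrow> ('a \<Rightarrow> real) \<Rightarrow> bool" where
  "(\<forall>x\<in>S. (f has_derivative (\<lambda>h. \<Sum>b\<in>Basis. (h \<bullet> b) * g b x)) (at x))
   \<Longrightarrow> (\<forall>b\<in>Basis. smooth_on S (g b)) \<Longrightarrow> smooth_on S f"

text \<open>Tuples (lambda_j) indexed by a finite linearly ordered type 'n (so n = CARD('n)),
the j-th coordinate being the j-th element of 'n in its order.\<close>

definition decr_tuples :: "(real^'n::{finite,linorder}) set" where
  "decr_tuples = {x. \<forall>i j. i < j \<longrightarrow> x $ i > x $ j}"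

definition qpoly :: "real^'n::{finite,linorder} \<Rightarrow> real poly" where
  "qpoly x = (\<Prod>j\<in>UNIV. [:- (x $ j), 1:])"

definition crit_pts :: "real^'n::{finite,linorder} \<Rightarrow> real set" where
  "crit_pts x = {t. poly (pderiv (qpoly x)) t = 0}"

definition mu :: "real^'n::{finite,linorder} \<Rightarrow> nat \<Rightarrow> real" where
  "mu x k = rev (sorted_list_of_set (crit_pts x)) ! (k - 1)"

definition Wmat :: "real^'n::{finite,linorder} \<Rightarrow> nat \<Rightarrow> 'n \<Rightarrow> real" where
  "Wmat x k j = inverse ((mu x k - x $ j)^2) / (\<Sum>i\<in>UNIV. inverse ((mu x k - x $ i)^2))"

end

(* The critical points of q are the zeros of q'/q = sum_j 1/(t - lambda_j), which is
   strictly decreasing on each interval between consecutive lambda's and changes sign there;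
   so each gap contains exactly one critical point, and by the intermediate value theorem it
   moves continuously with lambda. Subtracting the critical point equations at two tuples
   expresses mu_k(y) - mu_k(x) as a combination of the y_j - x_j whose weights tend to W_kj;
   this gives the derivative, and since W is a rational function of lambda and of the mu's,
   every mu_k is smooth. The identity mu_k = sum_j W_kj lambda_j is again the critical point
   equation, and the column sums come from differentiating the Vieta relation
   sum_k mu_k = (n-1)/n sum_j lambda_j, which compares coefficients in q' = n prod_k (x - mu_k). *)

theory Submission
  imports Defs
begin

section \<open>Algebras of functions closed under partial differentiation\<close>

definition has_partials_on ::
    "'a::euclidean_space set \<Rightarrow> ('a \<Rightarrow> real) \<Rightarrow> ('a \<Rightarrow> 'a \<Rightarrow> real) \<Rightarrow> bool" where
  "has_partials_on S f g \<longleftrightarrow> (\<forall>x\<in>S. (f has_derivative (\<lambda>h. \<Sum>b\<in>Basis. (h \<bullet> b) * g b x)) (at x))"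

inductive smooth_alg :: "'a::euclidean_space set \<Rightarrow> ('a \<Rightarrow> real) set \<Rightarrow> ('a \<Rightarrow> real) \<Rightarrow> bool"
  for S G where
  gen: "f \<in> G \<Longrightarrow> smooth_alg S G f"
| const: "smooth_alg S G (\<lambda>x. c)"
| inner: "smooth_alg S G (\<lambda>x. x \<bullet> v)"
| add: "smooth_alg S G f \<Longrightarrow> smooth_alg S G g \<Longrightarrow> smooth_alg S G (\<lambda>x. f x + g x)"
| mult: "smooth_alg S G f \<Longrightarrow> smooth_alg S G g \<Longrightarrow> smooth_alg S G (\<lambda>x. f x * g x)"
| inverse: "smooth_alg S G f \<Longrightarrow> \<forall>x\<in>S. f x \<noteq> 0 \<Longrightarrow> smooth_alg S G (\<lambda>x. inverse (f x))"

lemma has_partials_on_const: "has_partials_on S (\<lambda>x. c) (\<lambda>b x. 0)"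
  unfolding has_partials_on_def by (simp add: has_derivative_const)

lemma has_partials_on_inner: "has_partials_on S (\<lambda>x. x \<bullet> v) (\<lambda>b x. b \<bullet> v)"
proof -
  have "(\<lambda>h. h \<bullet> v) = (\<lambda>h. \<Sum>b\<in>Basis. (h \<bullet> b) * (b \<bullet> v))"
    by (subst euclidean_inner) (simp add: inner_commute[of v])
  then show ?thesis
    unfolding has_partials_on_def by (metis bounded_linear_imp_has_derivative bounded_linear_inner_left)
qed

lemma has_partials_on_add:
  assumes "has_partials_on S f f'" "has_partials_on S g g'"
  shows "has_partials_on S (\<lambda>x. f x + g x) (\<lambda>b x. f' b x + g' b x)"
  using assms unfolding has_partials_on_def
  by (auto intro!: has_derivative_eq_rhs[OF has_derivative_add] simp: distrib_left sum.distrib)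

lemma has_partials_on_mult:
  assumes "has_partials_on S f f'" "has_partials_on S g g'"
  shows "has_partials_on S (\<lambda>x. f x * g x) (\<lambda>b x. f x * g' b x + f' b x * g x)"
  using assms unfolding has_partials_on_def
  by (auto intro!: has_derivative_eq_rhs[OF has_derivative_mult]
      simp: fun_eq_iff algebra_simps sum.distrib sum_distrib_left sum_distrib_right)

lemma has_partials_on_inverse:
  assumes f': "has_partials_on S f f'" and nonzero: "\<forall>x\<in>S. f x \<noteq> 0"
  shows "has_partials_on S (\<lambda>x. inverse (f x)) (\<lambda>b x. - (inverse (f x) * f' b x * inverse (f x)))"
  unfolding has_partials_on_def
proof
  fix x assume "x \<in> S"
  show "((\<lambda>x. inverse (f x)) has_derivative
      (\<lambda>h. \<Sum>b\<in>Basis. (h \<bullet> b) * - (inverse (f x) * f' b x * inverse (f x)))) (at x)"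
  proof (rule has_derivative_eq_rhs[OF Deriv.has_derivative_inverse])
    show "(f has_derivative (\<lambda>h. \<Sum>b\<in>Basis. (h \<bullet> b) * f' b x)) (at x)"
      using f' \<open>x \<in> S\<close> unfolding has_partials_on_def by blast
    show "(\<lambda>h. - (inverse (f x) * (\<Sum>b\<in>Basis. (h \<bullet> b) * f' b x) * inverse (f x))) =
        (\<lambda>h. \<Sum>b\<in>Basis. (h \<bullet> b) * - (inverse (f x) * f' b x * inverse (f x)))"
      by (simp add: fun_eq_iff sum_distrib_left sum_distrib_right sum_negf ac_simps)
  qed (use nonzero \<open>x \<in> S\<close> in simp)
qed

lemma smooth_alg_sum:
  "finite A \<Longrightarrow> (\<And>a. a \<in> A \<Longrightarrow> smooth_alg S G (f a)) \<Longrightarrow> smooth_alg S G (\<lambda>x. \<Sum>a\<in>A. f a x)"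
  by (induction A rule: finite_induct) (simp_all add: smooth_alg.const[of S G 0] smooth_alg.add)

lemma smooth_alg_has_partials:
  assumes gen_partials: "\<And>f. f \<in> G \<Longrightarrow> \<exists>g. has_partials_on S f g \<and> (\<forall>b\<in>Basis. smooth_alg S G (g b))"
    and "smooth_alg S G f"
  shows "\<exists>g. has_partials_on S f g \<and> (\<forall>b\<in>Basis. smooth_alg S G (g b))"
  using assms(2)
proof induction
  case (gen f)
  then show ?case using gen_partials by blast
next
  case (const c)
  show ?case using has_partials_on_const smooth_alg.const by blast
next
  case (inner v)
  show ?case using has_partials_on_inner smooth_alg.const by blast
next
  case (add f g)
  then obtain f' g' where "has_partials_on S f f'" "\<forall>b\<in>Basis. smooth_alg S G (f' b)"
    and "has_partials_on S g g'" "\<forall>b\<in>Basis. smooth_alg S G (g' b)" by blast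
  then show ?case by (blast intro: has_partials_on_add smooth_alg.add)
next
  case (mult f g)
  then obtain f' g' where f': "has_partials_on S f f'" "\<forall>b\<in>Basis. smooth_alg S G (f' b)"
    and g': "has_partials_on S g g'" "\<forall>b\<in>Basis. smooth_alg S G (g' b)" by blast
  have "smooth_alg S G (\<lambda>x. f x * g' b x + f' b x * g x)" if "b \<in> Basis" for b
    using f'(2) g'(2) mult.hyps that by (intro smooth_alg.add smooth_alg.mult) auto
  with has_partials_on_mult[OF f'(1) g'(1)] show ?case by blast
next
  case (inverse f)
  then obtain f' where f': "has_partials_on S f f'" "\<forall>b\<in>Basis. smooth_alg S G (f' b)" by blast
  have "smooth_alg S G (\<lambda>x. (-1) * (inverse (f x) * f' b x * inverse (f x)))" if "b \<in> Basis" for b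
    using f'(2) that inverse.hyps by (intro smooth_alg.mult smooth_alg.const smooth_alg.inverse) auto
  with has_partials_on_inverse[OF f'(1) inverse.hyps(2)] show ?case by auto
qed

lemma smooth_on_smooth_alg:
  assumes "\<And>f. f \<in> G \<Longrightarrow> \<exists>g. has_partials_on S f g \<and> (\<forall>b\<in>Basis. smooth_alg S G (g b))"
    and "smooth_alg S G f"
  shows "smooth_on S f"
  using assms(2)
proof (coinduction arbitrary: f rule: smooth_on.coinduct)
  case (smooth_on f)
  then obtain g where "has_partials_on S f g" "\<forall>b\<in>Basis. smooth_alg S G (g b)"
    using smooth_alg_has_partials[OF assms(1)] by blast
  then show ?case unfolding has_partials_on_def by blast
qed

lemma cart_component_eq_sum_Basis: "(h :: real^'n) $ j = (\<Sum>b\<in>Basis. (h \<bullet> b) * b $ j)"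
proof -
  have "h $ j = (\<Sum>b\<in>Basis. (h \<bullet> b) *\<^sub>R b) $ j" by (simp only: euclidean_representation)
  then show ?thesis by simp
qed

lemma has_partials_on_cart:
  fixes f :: "real^'n \<Rightarrow> real"
  assumes "\<And>x. x \<in> S \<Longrightarrow> (f has_derivative (\<lambda>h. \<Sum>j\<in>UNIV. c x j * h $ j)) (at x)"
  shows "has_partials_on S f (\<lambda>b x. \<Sum>j\<in>UNIV. b $ j * c x j)"
  unfolding has_partials_on_def
proof
  fix x assume "x \<in> S"
  have "(\<Sum>j\<in>UNIV. c x j * h $ j) = (\<Sum>b\<in>Basis. (h \<bullet> b) * (\<Sum>j\<in>UNIV. b $ j * c x j))" for h
  proof -
    have "(\<Sum>j\<in>UNIV. c x j * h $ j) = (\<Sum>j\<in>UNIV. \<Sum>b\<in>Basis. (h \<bullet> b) * (b $ j * c x j))"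
      by (simp add: cart_component_eq_sum_Basis[of h] sum_distrib_left ac_simps)
    also have "\<dots> = (\<Sum>b\<in>Basis. \<Sum>j\<in>UNIV. (h \<bullet> b) * (b $ j * c x j))"
      by (rule sum.swap)
    also have "\<dots> = (\<Sum>b\<in>Basis. (h \<bullet> b) * (\<Sum>j\<in>UNIV. b $ j * c x j))"
      by (simp add: sum_distrib_left)
    finally show ?thesis .
  qed
  then show "(f has_derivative (\<lambda>h. \<Sum>b\<in>Basis. (h \<bullet> b) * (\<Sum>j\<in>UNIV. b $ j * c x j))) (at x)"
    using assms[OF \<open>x \<in> S\<close>] by simp
qed

section \<open>Differentiability from difference quotients\<close>

lemma has_derivative_from_slopes:
  fixes f :: "real^'n \<Rightarrow> real"
  assumes slopes: "\<forall>\<^sub>F y in at x. f y - f x = (\<Sum>j\<in>UNIV. G j y * (y $ j - x $ j))"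
    and lim: "\<And>j. (G j \<longlongrightarrow> c j) (at x)"
  shows "(f has_derivative (\<lambda>h. \<Sum>j\<in>UNIV. c j * h $ j)) (at x)"
proof -
  let ?L = "\<lambda>h. \<Sum>j\<in>UNIV. c j * h $ j"
  let ?e = "\<lambda>y. \<Sum>j\<in>UNIV. \<bar>G j y - c j\<bar>"
  have "(?e \<longlongrightarrow> (\<Sum>j\<in>UNIV. \<bar>c j - c j\<bar>)) (at x)"
    by (intro tendsto_intros lim)
  then have e_lim: "(?e \<longlongrightarrow> 0) (at x)" by simp
  have bound: "\<bar>f y - f x - ?L (y - x)\<bar> \<le> ?e y * norm (y - x)"
    if "f y - f x = (\<Sum>j\<in>UNIV. G j y * (y $ j - x $ j))" for y
  proof -
    have "f y - f x - ?L (y - x) = (\<Sum>j\<in>UNIV. (G j y - c j) * (y $ j - x $ j))"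
      using that by (simp add: sum_subtractf left_diff_distrib)
    also have "\<bar>\<dots>\<bar> \<le> (\<Sum>j\<in>UNIV. \<bar>G j y - c j\<bar> * norm (y - x))"
      by (rule order_trans[OF sum_abs sum_mono])
        (metis abs_ge_zero abs_mult component_le_norm_cart mult_left_mono vector_minus_component)
    finally show ?thesis by (simp add: sum_distrib_right)
  qed
  have "((\<lambda>y. (f y - f x - ?L (y - x)) /\<^sub>R norm (y - x)) \<longlongrightarrow> 0) (at x)"
  proof (rule Lim_null_comparison[OF _ e_lim])
    show "\<forall>\<^sub>F y in at x. norm ((f y - f x - ?L (y - x)) /\<^sub>R norm (y - x)) \<le> ?e y"
      using slopes
    proof eventually_elim
      case (elim y)
      show ?case
      proof (cases "y = x")
        case False
        then have "norm (y - x) > 0" by simp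
        with bound[OF elim] show ?thesis by (simp add: abs_mult field_simps)
      qed (simp add: sum_nonneg)
    qed
  qed
  moreover have "bounded_linear ?L"
    by (intro bounded_linear_sum bounded_linear_const_mult bounded_linear_vec_nth)
  ultimately show ?thesis by (simp add: has_derivative_at_within)
qed

section \<open>Products of linear factors\<close>

lemma degree_prod_linear:
  "finite A \<Longrightarrow> degree (\<Prod>i\<in>A. [:- c i, 1:] :: 'a::idom poly) = card A"
  by (simp add: degree_prod_sum_eq)

lemma coeff_prod_linear_card:
  "finite A \<Longrightarrow> coeff (\<Prod>i\<in>A. [:- c i, 1:] :: 'a::idom poly) (card A) = 1"
  using lead_coeff_prod[of "\<lambda>i. [:- c i, 1:]" A] by (simp add: degree_prod_linear)

lemma coeff_prod_linear_pred_card: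
  assumes "finite A" "A \<noteq> {}"
  shows "coeff (\<Prod>i\<in>A. [:- c i, 1:] :: 'a::idom poly) (card A - 1) = - (\<Sum>i\<in>A. c i)"
  using assms
proof (induction A rule: finite_ne_induct)
  case (singleton a)
  then show ?case by simp
next
  case (insert a A)
  then obtain m where m: "card A = Suc m" by (metis card_0_eq not0_implies_Suc)
  have "coeff (\<Prod>i\<in>insert a A. [:- c i, 1:]) (card (insert a A) - 1)
      = coeff (\<Prod>i\<in>A. [:- c i, 1:]) m - c a * coeff (\<Prod>i\<in>A. [:- c i, 1:]) (card A)"
    using insert.hyps m by simp
  also have "\<dots> = - (\<Sum>i\<in>insert a A. c i)"
    using insert coeff_prod_linear_card[OF insert.hyps(1), of c] m by simp
  finally show ?case .
qed

section \<open>The critical points of q\<close>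

definition nth_elem :: "nat \<Rightarrow> 'n::{finite,linorder}" where
  "nth_elem i = sorted_list_of_set UNIV ! i"

lemma nth_elem_less:
  assumes "i < j" "j < CARD('n::{finite,linorder})"
  shows "(nth_elem i :: 'n) < nth_elem j"
  using assms sorted_wrt_nth_less[of "(<)" "sorted_list_of_set (UNIV :: 'n set)" i j]
  unfolding nth_elem_def by simp

lemma nth_elem_surj: "\<exists>i < CARD('n::{finite,linorder}). nth_elem i = (j :: 'n)"
proof -
  have "j \<in> set (sorted_list_of_set (UNIV :: 'n set))" by simp
  then obtain i where "i < length (sorted_list_of_set (UNIV :: 'n set))" "sorted_list_of_set UNIV ! i = j"
    by (metis in_set_conv_nth)
  then show ?thesis unfolding nth_elem_def by auto
qed

lemma decr_tuples_nth_elem_less: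
  "y \<in> decr_tuples \<Longrightarrow> i < j \<Longrightarrow> j < CARD('n::{finite,linorder}) \<Longrightarrow> y $ (nth_elem j :: 'n) < y $ nth_elem i"
  unfolding decr_tuples_def using nth_elem_less[of i j] by auto

lemma decr_tuples_nth_elem_le:
  "y \<in> decr_tuples \<Longrightarrow> i \<le> j \<Longrightarrow> j < CARD('n::{finite,linorder}) \<Longrightarrow> y $ (nth_elem j :: 'n) \<le> y $ nth_elem i"
  using decr_tuples_nth_elem_less[of y i j] by (cases "i = j") auto

lemma decr_tuples_inj: "y \<in> decr_tuples \<Longrightarrow> y $ i = y $ j \<Longrightarrow> i = j"
  unfolding decr_tuples_def by (cases i j rule: linorder_cases) force+

definition log_deriv_qpoly :: "real^'n::{finite,linorder} \<Rightarrow> real \<Rightarrow> real" where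
  "log_deriv_qpoly y t = (\<Sum>j\<in>UNIV. inverse (t - y $ j))"

lemma poly_qpoly: "poly (qpoly y) t = (\<Prod>j\<in>UNIV. t - y $ j)"
  unfolding qpoly_def by (simp add: poly_prod)

lemma poly_pderiv_qpoly: "poly (pderiv (qpoly y)) t = (\<Sum>j\<in>UNIV. \<Prod>l\<in>UNIV-{j}. t - y $ l)"
  unfolding qpoly_def pderiv_prod by (simp add: poly_sum poly_prod pderiv_pCons)

lemma poly_pderiv_qpoly_eq:
  assumes "\<forall>j. t \<noteq> y $ j"
  shows "poly (pderiv (qpoly y)) t = poly (qpoly y) t * log_deriv_qpoly y t"
proof -
  have "(\<Prod>l\<in>UNIV-{j}. t - y $ l) = (\<Prod>l\<in>UNIV. t - y $ l) * inverse (t - y $ j)" for j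
    using assms prod.remove[of UNIV j "\<lambda>l. t - y $ l"] by (simp add: field_simps)
  then show ?thesis
    unfolding poly_pderiv_qpoly poly_qpoly log_deriv_qpoly_def by (simp add: sum_distrib_left)
qed

lemma pderiv_qpoly_zero_iff:
  assumes "\<forall>j. t \<noteq> y $ j"
  shows "poly (pderiv (qpoly y)) t = 0 \<longleftrightarrow> log_deriv_qpoly y t = 0"
  using assms unfolding poly_pderiv_qpoly_eq[OF assms] by (simp add: poly_qpoly)

lemma poly_pderiv_qpoly_root_nonzero:
  assumes "y \<in> decr_tuples"
  shows "poly (pderiv (qpoly y)) (y $ j) \<noteq> 0"
proof -
  have "(\<Sum>i\<in>UNIV-{j}. \<Prod>l\<in>UNIV-{i}. y $ j - y $ l) = 0"
    by (intro sum.neutral) (auto simp: prod_zero_iff)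
  then have "poly (pderiv (qpoly y)) (y $ j) = (\<Prod>l\<in>UNIV-{j}. y $ j - y $ l)"
    unfolding poly_pderiv_qpoly by (simp add: sum.remove[of UNIV j])
  also have "\<dots> \<noteq> 0"
    using decr_tuples_inj[OF assms] by (auto simp: prod_zero_iff)
  finally show ?thesis .
qed

lemma log_deriv_qpoly_pos: "\<forall>j. y $ j < t \<Longrightarrow> log_deriv_qpoly y t > 0"
  unfolding log_deriv_qpoly_def by (intro sum_pos) auto

lemma log_deriv_qpoly_neg:
  fixes y :: "real^'n::{finite,linorder}"
  assumes "\<forall>j. t < y $ j"
  shows "log_deriv_qpoly y t < 0"
proof -
  have "log_deriv_qpoly y t < (\<Sum>j\<in>(UNIV :: 'n set). 0)"
    unfolding log_deriv_qpoly_def using assms by (intro sum_strict_mono) auto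
  then show ?thesis by simp
qed

lemma log_deriv_qpoly_strict_antimono:
  assumes "a < b" and same_side: "\<forall>j. (a - y $ j) * (b - y $ j) > 0"
  shows "log_deriv_qpoly y b < log_deriv_qpoly y a"
  unfolding log_deriv_qpoly_def
proof (intro sum_strict_mono)
  fix j
  from same_side have "(y $ j < a \<and> y $ j < b) \<or> (a < y $ j \<and> b < y $ j)"
    by (auto simp: zero_less_mult_iff)
  with \<open>a < b\<close> show "inverse (b - y $ j) < inverse (a - y $ j)"
    by (auto intro: less_imp_inverse_less less_imp_inverse_less_neg)
qed auto

text \<open>Ranks are 0-based, so \<open>y $ nth_elem (k - 1)\<close> and \<open>y $ nth_elem k\<close> are
  \<open>\<lambda>\<^sub>k\<close> and \<open>\<lambda>\<^sub>k\<^sub>+\<^sub>1\<close>: the k-th gap is \<open>(\<lambda>\<^sub>k\<^sub>+\<^sub>1, \<lambda>\<^sub>k)\<close>.\<close>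
definition in_gap :: "real^'n::{finite,linorder} \<Rightarrow> nat \<Rightarrow> real \<Rightarrow> bool" where
  "in_gap y k t \<longleftrightarrow> y $ (nth_elem k :: 'n) < t \<and> t < y $ (nth_elem (k - 1) :: 'n)"

lemma in_gap_same_side:
  fixes y :: "real^'n::{finite,linorder}"
  assumes "y \<in> decr_tuples" "1 \<le> k" "k < CARD('n)" "in_gap y k t" "in_gap y k t'"
  shows "(t - y $ j) * (t' - y $ j) > 0"
proof -
  obtain i where i: "i < CARD('n)" "nth_elem i = j" using nth_elem_surj by blast
  show ?thesis
  proof (cases "i \<le> k - 1")
    case True
    then have "y $ nth_elem (k - 1) \<le> y $ j"
      using decr_tuples_nth_elem_le[OF assms(1), of i "k - 1"] i assms by auto
    then show ?thesis using assms(4,5) unfolding in_gap_def by (intro mult_neg_neg) auto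
  next
    case False
    then have "y $ j \<le> y $ nth_elem k"
      using decr_tuples_nth_elem_le[OF assms(1), of k i] i by auto
    then show ?thesis using assms(4,5) unfolding in_gap_def by (intro mult_pos_pos) auto
  qed
qed

lemma in_gap_not_root:
  fixes y :: "real^'n::{finite,linorder}"
  assumes "y \<in> decr_tuples" "1 \<le> k" "k < CARD('n)" "in_gap y k t"
  shows "\<forall>j. t \<noteq> y $ j"
proof
  fix j
  show "t \<noteq> y $ j" using in_gap_same_side[OF assms assms(4), of j] by auto
qed

lemma crit_in_gap_unique:
  fixes y :: "real^'n::{finite,linorder}"
  assumes y: "y \<in> decr_tuples" and k: "1 \<le> k" "k < CARD('n)"
    and t: "in_gap y k t" "poly (pderiv (qpoly y)) t = 0"
    and t': "in_gap y k t'" "poly (pderiv (qpoly y)) t' = 0"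
  shows "t = t'"
proof -
  have "log_deriv_qpoly y t = 0" "log_deriv_qpoly y t' = 0"
    using pderiv_qpoly_zero_iff in_gap_not_root y k t t' by blast+
  then show ?thesis
    using log_deriv_qpoly_strict_antimono[of t t' y] log_deriv_qpoly_strict_antimono[of t' t y]
      in_gap_same_side[OF y k t(1) t'(1)] in_gap_same_side[OF y k t'(1) t(1)]
    by (cases t t' rule: linorder_cases) auto
qed

lemma crit_in_gap_exists:
  fixes y :: "real^'n::{finite,linorder}"
  assumes "y \<in> decr_tuples" "1 \<le> k" "k < CARD('n)"
  shows "\<exists>t. in_gap y k t \<and> poly (pderiv (qpoly y)) t = 0"
proof -
  let ?a = "y $ (nth_elem k :: 'n)" and ?b = "y $ (nth_elem (k - 1) :: 'n)"
  have "?a < ?b" using decr_tuples_nth_elem_less[OF assms(1), of "k - 1" k] assms by auto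
  moreover have "poly (qpoly y) ?a = 0" "poly (qpoly y) ?b = 0"
    unfolding poly_qpoly by (auto simp: prod_zero_iff)
  ultimately obtain t where "?a < t" "t < ?b" "poly (pderiv (qpoly y)) t = 0"
    using Rolle_deriv[of ?a ?b "poly (qpoly y)" "\<lambda>t v. poly (pderiv (qpoly y)) t * v"]
    by (auto simp: fun_eq_iff poly_DERIV[unfolded has_field_derivative_def] continuous_intros)
  then show ?thesis unfolding in_gap_def by blast
qed

lemma crit_in_some_gap:
  fixes y :: "real^'n::{finite,linorder}"
  assumes y: "y \<in> decr_tuples" and crit: "poly (pderiv (qpoly y)) t = 0"
  shows "\<exists>k. 1 \<le> k \<and> k < CARD('n) \<and> in_gap y k t"
proof -
  have not_root: "t \<noteq> y $ j" for j using poly_pderiv_qpoly_root_nonzero[OF y] crit by metis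
  then have "log_deriv_qpoly y t = 0" using pderiv_qpoly_zero_iff crit by blast
  then obtain j j' where "\<not> y $ j < t" "\<not> t < y $ j'"
    using log_deriv_qpoly_pos[of y t] log_deriv_qpoly_neg[of t y] by auto
  with not_root[of j] not_root[of j'] have j: "t < y $ j" and j': "y $ j' < t" by linarith+
  obtain i i' where i: "i < CARD('n)" "nth_elem i = j" and i': "i' < CARD('n)" "nth_elem i' = j'"
    using nth_elem_surj by metis
  have top: "t < y $ (nth_elem 0 :: 'n)"
    using decr_tuples_nth_elem_le[OF y, of 0 i] i j by auto
  have "i' \<le> CARD('n) - 1" using i' by linarith
  then have bot: "y $ (nth_elem (CARD('n) - 1) :: 'n) < t"
    using decr_tuples_nth_elem_le[OF y, of i' "CARD('n) - 1"] i' j' by auto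
  define k where "k = (LEAST i. y $ (nth_elem i :: 'n) < t)"
  have below: "y $ (nth_elem k :: 'n) < t" and "k \<le> CARD('n) - 1"
    unfolding k_def using bot by (auto intro: LeastI Least_le)
  moreover have "k \<noteq> 0" using below top by (intro notI) simp
  moreover have "\<not> y $ (nth_elem (k - 1) :: 'n) < t"
    using not_less_Least[of "k - 1" "\<lambda>i. y $ (nth_elem i :: 'n) < t"] \<open>k \<noteq> 0\<close>
    unfolding k_def[symmetric] by simp
  with not_root[of "nth_elem (k - 1)"] have "t < y $ (nth_elem (k - 1) :: 'n)" by linarith
  ultimately show ?thesis unfolding in_gap_def by (intro exI[of _ k]) auto
qed

definition gap_crit :: "real^'n::{finite,linorder} \<Rightarrow> nat \<Rightarrow> real" where
  "gap_crit y k = (THE t. in_gap y k t \<and> poly (pderiv (qpoly y)) t = 0)"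

lemma gap_crit_spec:
  fixes y :: "real^'n::{finite,linorder}"
  assumes "y \<in> decr_tuples" "1 \<le> k" "k < CARD('n)"
  shows "in_gap y k (gap_crit y k) \<and> poly (pderiv (qpoly y)) (gap_crit y k) = 0"
  unfolding gap_crit_def
  by (rule theI') (use crit_in_gap_exists[OF assms] crit_in_gap_unique[OF assms] in blast)

lemma gap_crit_strict_decr:
  fixes y :: "real^'n::{finite,linorder}"
  assumes y: "y \<in> decr_tuples" and "1 \<le> k" "k < k'" "k' < CARD('n)"
  shows "gap_crit y k' < gap_crit y k"
proof -
  have "gap_crit y k' < y $ (nth_elem (k' - 1) :: 'n)"
    using gap_crit_spec[OF y, of k'] assms unfolding in_gap_def by auto
  also have "\<dots> \<le> y $ (nth_elem k :: 'n)"
    using decr_tuples_nth_elem_le[OF y, of k "k' - 1"] assms by auto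
  also have "\<dots> < gap_crit y k"
    using gap_crit_spec[OF y, of k] assms unfolding in_gap_def by auto
  finally show ?thesis .
qed

lemma crit_pts_eq_gap_crit_image:
  fixes y :: "real^'n::{finite,linorder}"
  assumes y: "y \<in> decr_tuples"
  shows "crit_pts y = gap_crit y ` {1..<CARD('n)}"
proof
  show "crit_pts y \<subseteq> gap_crit y ` {1..<CARD('n)}"
  proof
    fix t assume "t \<in> crit_pts y"
    then have crit: "poly (pderiv (qpoly y)) t = 0" unfolding crit_pts_def by simp
    then obtain k where k: "1 \<le> k" "k < CARD('n)" "in_gap y k t"
      using crit_in_some_gap[OF y] by blast
    then have "t = gap_crit y k"
      using crit_in_gap_unique[OF y k(1,2) k(3) crit] gap_crit_spec[OF y k(1,2)] by blast
    with k show "t \<in> gap_crit y ` {1..<CARD('n)}" by force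
  qed
  show "gap_crit y ` {1..<CARD('n)} \<subseteq> crit_pts y"
    using gap_crit_spec[OF y] unfolding crit_pts_def by auto
qed

lemma mu_eq_gap_crit:
  fixes y :: "real^'n::{finite,linorder}"
  assumes y: "y \<in> decr_tuples" and k: "1 \<le> k" "k < CARD('n)"
  shows "mu y k = gap_crit y k"
proof -
  define xs where "xs = map (gap_crit y) [1..<CARD('n)]"
  have "sorted_wrt (>) xs"
    unfolding xs_def sorted_wrt_iff_nth_less using gap_crit_strict_decr[OF y] by auto
  then have "sorted_wrt (<) (rev xs)" by (simp add: sorted_wrt_rev)
  moreover have "set (rev xs) = crit_pts y"
    unfolding crit_pts_eq_gap_crit_image[OF y] xs_def by simp
  ultimately have "sorted_list_of_set (crit_pts y) = rev xs"
    by (metis sorted_list_of_set.idem_if_sorted_distinct strict_sorted_iff)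
  then show ?thesis unfolding mu_def xs_def using k by simp
qed

lemma mu_in_gap:
  fixes y :: "real^'n::{finite,linorder}"
  assumes "y \<in> decr_tuples" "1 \<le> k" "k < CARD('n)"
  shows "in_gap y k (mu y k)"
  using gap_crit_spec[OF assms] mu_eq_gap_crit[OF assms] by simp

lemma mu_crit:
  fixes y :: "real^'n::{finite,linorder}"
  assumes "y \<in> decr_tuples" "1 \<le> k" "k < CARD('n)"
  shows "poly (pderiv (qpoly y)) (mu y k) = 0"
  using gap_crit_spec[OF assms] mu_eq_gap_crit[OF assms] by simp

lemma mu_unique:
  fixes y :: "real^'n::{finite,linorder}"
  assumes "y \<in> decr_tuples" "1 \<le> k" "k < CARD('n)"
    and "in_gap y k t" "poly (pderiv (qpoly y)) t = 0"
  shows "mu y k = t"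
  using crit_in_gap_unique[OF assms(1-3) mu_in_gap[OF assms(1-3)] mu_crit[OF assms(1-3)] assms(4,5)] .

lemma mu_not_root:
  fixes y :: "real^'n::{finite,linorder}"
  assumes "y \<in> decr_tuples" "1 \<le> k" "k < CARD('n)"
  shows "mu y k \<noteq> y $ j"
  using in_gap_not_root[OF assms mu_in_gap[OF assms]] by blast

lemma log_deriv_qpoly_mu:
  fixes y :: "real^'n::{finite,linorder}"
  assumes "y \<in> decr_tuples" "1 \<le> k" "k < CARD('n)"
  shows "log_deriv_qpoly y (mu y k) = 0"
  using pderiv_qpoly_zero_iff mu_not_root[OF assms] mu_crit[OF assms] by blast

lemma mu_strict_decr:
  fixes y :: "real^'n::{finite,linorder}"
  assumes "y \<in> decr_tuples" "1 \<le> k" "k < k'" "k' < CARD('n)"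
  shows "mu y k' < mu y k"
  using gap_crit_strict_decr[OF assms] mu_eq_gap_crit[OF assms(1)] assms by simp

section \<open>Continuity and derivative of the critical points\<close>

lemma open_decr_tuples: "open (decr_tuples :: (real^'n::{finite,linorder}) set)"
proof -
  have "(decr_tuples :: (real^'n::{finite,linorder}) set) = (\<Inter>p\<in>{p. fst p < snd p}. {x. x $ snd p < x $ fst p})"
    by (auto simp: decr_tuples_def)
  moreover have "open (\<Inter>p\<in>{p. fst p < snd p}. {x::real^'n::{finite,linorder}. x $ snd p < x $ fst p})"
    by (intro open_INT) (auto intro!: open_Collect_less continuous_on_component continuous_on_id)
  ultimately show ?thesis by simp
qed

lemma tendsto_log_deriv_qpoly:
  "\<forall>j. t \<noteq> x $ j \<Longrightarrow> ((\<lambda>y. log_deriv_qpoly y t) \<longlongrightarrow> log_deriv_qpoly x t) (at x)"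
  unfolding log_deriv_qpoly_def by (intro tendsto_intros) auto

lemma log_deriv_qpoly_sign_around_mu:
  fixes x :: "real^'n::{finite,linorder}"
  assumes x: "x \<in> decr_tuples" and k: "1 \<le> k" "k < CARD('n)"
    and a: "in_gap x k a" "a < mu x k" and b: "in_gap x k b" "mu x k < b"
  shows "log_deriv_qpoly x a > 0" "log_deriv_qpoly x b < 0"
  using log_deriv_qpoly_strict_antimono[of a "mu x k" x] log_deriv_qpoly_strict_antimono[of "mu x k" b x]
    in_gap_same_side[OF x k a(1) mu_in_gap[OF x k]] in_gap_same_side[OF x k mu_in_gap[OF x k] b(1)]
    log_deriv_qpoly_mu[OF x k] a(2) b(2)
  by auto

lemma mu_between:
  fixes y :: "real^'n::{finite,linorder}"
  assumes y: "y \<in> decr_tuples" and k: "1 \<le> k" "k < CARD('n)" and "a < b"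
    and gap: "\<And>t. a \<le> t \<Longrightarrow> t \<le> b \<Longrightarrow> in_gap y k t"
    and sign: "log_deriv_qpoly y a > 0" "log_deriv_qpoly y b < 0"
  shows "a < mu y k \<and> mu y k < b"
proof -
  have "continuous_on {a..b} (log_deriv_qpoly y)"
    unfolding log_deriv_qpoly_def using in_gap_not_root[OF y k gap] by (intro continuous_intros) auto
  then obtain t where t: "a \<le> t" "t \<le> b" "log_deriv_qpoly y t = 0"
    using IVT2'[of "log_deriv_qpoly y" b 0 a] sign \<open>a < b\<close> by auto
  then have "poly (pderiv (qpoly y)) t = 0"
    using pderiv_qpoly_zero_iff[OF in_gap_not_root[OF y k gap[OF t(1,2)]]] by simp
  then have "mu y k = t" using mu_unique[OF y k gap[OF t(1,2)]] by simp
  moreover have "t \<noteq> a" "t \<noteq> b" using t sign by auto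
  ultimately show ?thesis using t by auto
qed

text \<open>For \<open>y\<close> near \<open>x\<close>, the interval \<open>[\<mu>\<^sub>k - \<epsilon>, \<mu>\<^sub>k + \<epsilon>]\<close> stays inside the k-th gap of \<open>y\<close>,
  and \<open>log_deriv_qpoly y\<close> still changes sign on it.\<close>
lemma tendsto_mu:
  fixes x :: "real^'n::{finite,linorder}"
  assumes x: "x \<in> decr_tuples" and k: "1 \<le> k" "k < CARD('n)"
  shows "((\<lambda>y. mu y k) \<longlongrightarrow> mu x k) (at x)"
proof (rule tendstoI)
  fix e :: real assume "e > 0"
  define m where "m = mu x k"
  let ?lo = "\<lambda>y::real^'n::{finite,linorder}. y $ nth_elem k"
    and ?hi = "\<lambda>y::real^'n::{finite,linorder}. y $ nth_elem (k - 1)"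
  have "?lo x < m" "m < ?hi x" using mu_in_gap[OF x k] unfolding m_def in_gap_def by auto
  then obtain \<delta> where "0 < \<delta>" "\<delta> < m - ?lo x" "\<delta> < ?hi x - m"
    using field_lbound_gt_zero[of "m - ?lo x" "?hi x - m"] by auto
  moreover obtain \<epsilon> where "0 < \<epsilon>" "\<epsilon> < e" "\<epsilon> < \<delta>"
    using field_lbound_gt_zero[OF \<open>e > 0\<close> \<open>0 < \<delta>\<close>] by blast
  ultimately have \<epsilon>: "0 < \<epsilon>" "\<epsilon> \<le> e" "?lo x < m - \<epsilon>" "m + \<epsilon> < ?hi x" by linarith+
  then have gap_x: "in_gap x k (m - \<epsilon>)" "in_gap x k (m + \<epsilon>)"
    using \<open>?lo x < m\<close> \<open>m < ?hi x\<close> unfolding in_gap_def by auto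
  have sign_x: "log_deriv_qpoly x (m - \<epsilon>) > 0" "log_deriv_qpoly x (m + \<epsilon>) < 0"
    using log_deriv_qpoly_sign_around_mu[OF x k gap_x(1) _ gap_x(2)] \<epsilon>(1) unfolding m_def by auto
  have "\<forall>\<^sub>F y in at x. log_deriv_qpoly y (m - \<epsilon>) > 0"
    using order_tendstoD(1)[OF tendsto_log_deriv_qpoly[OF in_gap_not_root[OF x k gap_x(1)]] sign_x(1)] .
  moreover have "\<forall>\<^sub>F y in at x. log_deriv_qpoly y (m + \<epsilon>) < 0"
    using order_tendstoD(2)[OF tendsto_log_deriv_qpoly[OF in_gap_not_root[OF x k gap_x(2)]] sign_x(2)] .
  moreover have "\<forall>\<^sub>F y in at x. ?lo y < m - \<epsilon>"
    using order_tendstoD(2)[OF tendsto_vec_nth[OF tendsto_ident_at] \<epsilon>(3)] .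
  moreover have "\<forall>\<^sub>F y in at x. m + \<epsilon> < ?hi y"
    using order_tendstoD(1)[OF tendsto_vec_nth[OF tendsto_ident_at] \<epsilon>(4)] .
  moreover have "\<forall>\<^sub>F y in at x. y \<in> decr_tuples"
    using eventually_at_in_open'[OF open_decr_tuples x] .
  ultimately show "\<forall>\<^sub>F y in at x. dist (mu y k) m < e"
  proof eventually_elim
    case (elim y)
    have "m - \<epsilon> < mu y k \<and> mu y k < m + \<epsilon>"
      by (rule mu_between[OF elim(5) k]) (use elim \<epsilon>(1) in \<open>auto simp: in_gap_def\<close>)
    then show ?case using \<epsilon>(2) unfolding dist_real_def by auto
  qed
qed

text \<open>Subtracting the equations \<open>log_deriv_qpoly x (mu x k) = 0\<close> and \<open>log_deriv_qpoly y (mu y k) = 0\<close>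
  term by term expresses \<open>mu y k - mu x k\<close> as a weighted combination of the \<open>y $ j - x $ j\<close>.\<close>
lemma mu_difference:
  fixes x y :: "real^'n::{finite,linorder}"
  assumes x: "x \<in> decr_tuples" and y: "y \<in> decr_tuples" and k: "1 \<le> k" "k < CARD('n)"
  defines "P j \<equiv> inverse ((mu x k - x $ j) * (mu y k - y $ j))"
  shows "(mu y k - mu x k) * (\<Sum>j\<in>UNIV. P j) = (\<Sum>j\<in>UNIV. (y $ j - x $ j) * P j)"
proof -
  have inverse_diff: "inverse b - inverse a = (a - b) * inverse (a * b)" if "a \<noteq> 0" "b \<noteq> 0" for a b :: real
    using that by (simp add: field_simps)
  have term_diff: "inverse (mu y k - y $ j) - inverse (mu x k - x $ j)
      = (y $ j - x $ j) * P j - (mu y k - mu x k) * P j" for j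
    using inverse_diff[of "mu x k - x $ j" "mu y k - y $ j"] mu_not_root[OF x k, of j] mu_not_root[OF y k, of j]
    unfolding P_def[symmetric] by (simp add: algebra_simps)
  have "0 = log_deriv_qpoly y (mu y k) - log_deriv_qpoly x (mu x k)"
    using log_deriv_qpoly_mu[OF x k] log_deriv_qpoly_mu[OF y k] by simp
  also have "\<dots> = (\<Sum>j\<in>UNIV. (y $ j - x $ j) * P j) - (mu y k - mu x k) * (\<Sum>j\<in>UNIV. P j)"
    unfolding log_deriv_qpoly_def sum_subtractf[symmetric] term_diff
    by (simp add: sum_subtractf sum_distrib_left)
  finally show ?thesis by simp
qed

lemma mu_has_derivative:
  fixes x :: "real^'n::{finite,linorder}"
  assumes x: "x \<in> decr_tuples" and k: "1 \<le> k" "k < CARD('n)"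
  shows "((\<lambda>y. mu y k) has_derivative (\<lambda>h. \<Sum>j\<in>UNIV. Wmat x k j * h $ j)) (at x)"
proof -
  define P where "P j y = inverse ((mu x k - x $ j) * (mu y k - y $ j))" for j y
  define S where "S = (\<Sum>i\<in>UNIV. inverse ((mu x k - x $ i)^2))"
  have "S > 0" unfolding S_def using mu_not_root[OF x k] by (intro sum_pos) auto
  have P_lim: "(P j \<longlongrightarrow> inverse ((mu x k - x $ j)^2)) (at x)" for j
    unfolding P_def power2_eq_square using mu_not_root[OF x k, of j]
    by (intro tendsto_intros tendsto_mu[OF x k]) auto
  then have sum_P_lim: "((\<lambda>y. \<Sum>i\<in>UNIV. P i y) \<longlongrightarrow> S) (at x)"
    unfolding S_def by (intro tendsto_sum)
  have "((\<lambda>y. P j y / (\<Sum>i\<in>UNIV. P i y)) \<longlongrightarrow> Wmat x k j) (at x)" for j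
    unfolding Wmat_def S_def[symmetric] using \<open>S > 0\<close> by (intro tendsto_intros P_lim sum_P_lim) auto
  moreover have "\<forall>\<^sub>F y in at x. mu y k - mu x k = (\<Sum>j\<in>UNIV. P j y / (\<Sum>i\<in>UNIV. P i y) * (y $ j - x $ j))"
    using eventually_at_in_open'[OF open_decr_tuples x] order_tendstoD(1)[OF sum_P_lim \<open>S > 0\<close>]
  proof eventually_elim
    case (elim y)
    let ?s = "\<Sum>i\<in>UNIV. P i y"
    have "(\<Sum>j\<in>UNIV. P j y / ?s * (y $ j - x $ j)) = (\<Sum>j\<in>UNIV. (y $ j - x $ j) * P j y) / ?s"
      by (simp add: sum_divide_distrib ac_simps)
    also have "(\<Sum>j\<in>UNIV. (y $ j - x $ j) * P j y) = (mu y k - mu x k) * ?s"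
      using mu_difference[OF x elim(1) k] by (simp only: P_def)
    also have "\<dots> / ?s = mu y k - mu x k"
      using elim(2) by simp
    finally show ?case by simp
  qed
  ultimately show ?thesis by (rule has_derivative_from_slopes[rotated])
qed

section \<open>The matrix W\<close>

lemma Wmat_pos:
  fixes x :: "real^'n::{finite,linorder}"
  assumes "x \<in> decr_tuples" "1 \<le> k" "k < CARD('n)"
  shows "Wmat x k j > 0"
  using mu_not_root[OF assms] unfolding Wmat_def by (intro divide_pos_pos sum_pos) auto

lemma sum_Wmat_row:
  fixes x :: "real^'n::{finite,linorder}"
  assumes "x \<in> decr_tuples" "1 \<le> k" "k < CARD('n)"
  shows "(\<Sum>j\<in>UNIV. Wmat x k j) = 1"
proof -
  have "(\<Sum>i\<in>UNIV. inverse ((mu x k - x $ i)^2)) > 0"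
    using mu_not_root[OF assms] by (intro sum_pos) auto
  then show ?thesis unfolding Wmat_def by (simp add: sum_divide_distrib[symmetric])
qed

text \<open>Since \<open>Wmat x k j * (\<mu>\<^sub>k - \<lambda>\<^sub>j)\<close> is proportional to \<open>1 / (\<mu>\<^sub>k - \<lambda>\<^sub>j)\<close>, this identity
  is the critical point equation \<open>q'(\<mu>\<^sub>k) / q(\<mu>\<^sub>k) = 0\<close>.\<close>
lemma mu_eq_sum_Wmat:
  fixes x :: "real^'n::{finite,linorder}"
  assumes "x \<in> decr_tuples" "1 \<le> k" "k < CARD('n)"
  shows "mu x k = (\<Sum>j\<in>UNIV. Wmat x k j * x $ j)"
proof -
  define m where "m = mu x k"
  define S where "S = (\<Sum>i\<in>UNIV. inverse ((m - x $ i)^2))"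
  have "S > 0" unfolding S_def m_def using mu_not_root[OF assms] by (intro sum_pos) auto
  have weighted_diff: "Wmat x k j * (m - x $ j) = inverse (m - x $ j) / S" for j
    using mu_not_root[OF assms, of j] unfolding Wmat_def S_def m_def by (simp add: power2_eq_square)
  have "Wmat x k j * x $ j = m * Wmat x k j - inverse (m - x $ j) / S" for j
  proof -
    have "Wmat x k j * x $ j = m * Wmat x k j - Wmat x k j * (m - x $ j)" by (simp add: algebra_simps)
    then show ?thesis by (simp only: weighted_diff)
  qed
  then have "(\<Sum>j\<in>UNIV. Wmat x k j * x $ j) = m * (\<Sum>j\<in>UNIV. Wmat x k j) - log_deriv_qpoly x m / S"
    unfolding log_deriv_qpoly_def by (simp add: sum_subtractf sum_distrib_left sum_divide_distrib)
  also have "\<dots> = m"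
    using sum_Wmat_row[OF assms] log_deriv_qpoly_mu[OF assms] unfolding m_def by simp
  finally show ?thesis unfolding m_def ..
qed

lemma pderiv_qpoly_eq_smult_prod_mu:
  fixes y :: "real^'n::{finite,linorder}"
  assumes y: "y \<in> decr_tuples"
  shows "pderiv (qpoly y) = smult (of_nat CARD('n)) (\<Prod>k\<in>{1..<CARD('n)}. [:- mu y k, 1:])"
proof (rule poly_eqI_degree_lead_coeff)
  let ?n = "CARD('n)" and ?P = "\<Prod>k\<in>{1..<CARD('n)}. [:- mu y k, 1:]"
  have n: "Suc (?n - 1) = ?n" by simp
  have q: "degree (qpoly y) = ?n" "coeff (qpoly y) ?n = 1"
    unfolding qpoly_def by (simp_all add: degree_prod_linear coeff_prod_linear_card)
  have P: "degree ?P = ?n - 1" "coeff ?P (?n - 1) = 1"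
    using degree_prod_linear[of "{1..<?n}"] coeff_prod_linear_card[of "{1..<?n}"] by simp_all
  show "coeff (pderiv (qpoly y)) (?n - 1) = coeff (smult (of_nat ?n) ?P) (?n - 1)"
    using q P n by (simp add: coeff_pderiv)
  show "degree (pderiv (qpoly y)) \<le> ?n - 1" using q by (simp add: degree_pderiv)
  show "degree (smult (of_nat ?n) ?P) \<le> ?n - 1" using P by simp
  have "inj_on (mu y) {1..<?n}"
  proof (rule inj_onI)
    fix k k' assume "k \<in> {1..<?n}" "k' \<in> {1..<?n}" "mu y k = mu y k'"
    then show "k = k'"
      using mu_strict_decr[OF y, of k k'] mu_strict_decr[OF y, of k' k]
      by (cases k k' rule: linorder_cases) auto
  qed
  then show "card (mu y ` {1..<?n}) \<ge> ?n - 1" by (simp add: card_image)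
  show "poly (pderiv (qpoly y)) t = poly (smult (of_nat ?n) ?P) t" if "t \<in> mu y ` {1..<?n}" for t
  proof -
    from that obtain k where k: "k \<in> {1..<?n}" and t: "t = mu y k" by blast
    have "poly ?P t = 0"
      unfolding poly_prod t using k by (intro prod_zero) auto
    with k t mu_crit[OF y] show ?thesis by simp
  qed
qed

text \<open>Vieta: compare the coefficients of \<open>x\<^sup>n\<^sup>-\<^sup>2\<close> in \<open>q' = n \<Prod>\<^sub>k (x - \<mu>\<^sub>k)\<close>.\<close>
lemma sum_mu:
  fixes y :: "real^'n::{finite,linorder}"
  assumes y: "y \<in> decr_tuples" and n: "CARD('n) \<ge> 2"
  shows "(\<Sum>k\<in>{1..<CARD('n)}. mu y k) = real (CARD('n) - 1) / real CARD('n) * (\<Sum>j\<in>UNIV. y $ j)"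
proof -
  let ?n = "CARD('n)"
  have "coeff (pderiv (qpoly y)) (?n - 2) = real (?n - 1) * coeff (qpoly y) (?n - 1)"
    using n by (simp add: coeff_pderiv Suc_diff_Suc numeral_2_eq_2)
  also have "coeff (qpoly y) (?n - 1) = - (\<Sum>j\<in>UNIV. y $ j)"
    unfolding qpoly_def using coeff_prod_linear_pred_card[of "UNIV :: 'n set"] by simp
  finally have "coeff (pderiv (qpoly y)) (?n - 2) = real (?n - 1) * - (\<Sum>j\<in>UNIV. y $ j)" .
  moreover have "coeff (pderiv (qpoly y)) (?n - 2) = - real ?n * (\<Sum>k\<in>{1..<?n}. mu y k)"
    unfolding pderiv_qpoly_eq_smult_prod_mu[OF y]
    using coeff_prod_linear_pred_card[of "{1..<?n}" "mu y"] n by (simp add: numeral_2_eq_2)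
  ultimately show ?thesis using n by (simp add: field_simps)
qed

lemma sum_Wmat_column:
  fixes x :: "real^'n::{finite,linorder}"
  assumes x: "x \<in> decr_tuples" and n: "CARD('n) \<ge> 2"
  shows "(\<Sum>k\<in>{1..<CARD('n)}. Wmat x k j) = real (CARD('n) - 1) / real CARD('n)"
proof -
  define c where "c = real (CARD('n) - 1) / real CARD('n)"
  have "((\<lambda>y. \<Sum>k\<in>{1..<CARD('n)}. mu y k) has_derivative
      (\<lambda>h. \<Sum>k\<in>{1..<CARD('n)}. \<Sum>i\<in>UNIV. Wmat x k i * h $ i)) (at x)"
    by (intro has_derivative_sum mu_has_derivative[OF x]) auto
  moreover have "((\<lambda>y. \<Sum>k\<in>{1..<CARD('n)}. mu y k) has_derivative (\<lambda>h. c * (\<Sum>i\<in>UNIV. h $ i))) (at x)"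
  proof (rule has_derivative_transform_within_open[OF _ open_decr_tuples x])
    show "((\<lambda>y. c * (\<Sum>i\<in>UNIV. y $ i)) has_derivative (\<lambda>h. c * (\<Sum>i\<in>UNIV. h $ i))) (at x)"
      by (intro bounded_linear_imp_has_derivative bounded_linear_const_mult bounded_linear_sum
          bounded_linear_vec_nth)
    show "c * (\<Sum>i\<in>UNIV. y $ i) = (\<Sum>k\<in>{1..<CARD('n)}. mu y k)"
      if "y \<in> decr_tuples" for y :: "real^'n::{finite,linorder}"
      using sum_mu[OF that n] unfolding c_def by simp
  qed
  ultimately have "(\<lambda>h. \<Sum>k\<in>{1..<CARD('n)}. \<Sum>i\<in>UNIV. Wmat x k i * h $ i) = (\<lambda>h. c * (\<Sum>i\<in>UNIV. h $ i))"
    by (rule has_derivative_unique)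
  from fun_cong[OF this, of "axis j 1"] show ?thesis
    unfolding c_def by (simp add: axis_def if_distrib cong: if_cong)
qed

section \<open>Smoothness\<close>

lemma smooth_alg_Wmat:
  fixes G :: "(real^'n::{finite,linorder} \<Rightarrow> real) set"
  assumes mu: "(\<lambda>y. mu y k) \<in> G" and k: "1 \<le> k" "k < CARD('n)"
  shows "smooth_alg decr_tuples G (\<lambda>y. Wmat y k j)"
proof -
  let ?S = "decr_tuples :: (real^'n::{finite,linorder}) set"
  have diff: "smooth_alg ?S G (\<lambda>y. mu y k - y $ i)" for i
  proof -
    have "smooth_alg ?S G (\<lambda>y. mu y k + (-1) * (y \<bullet> axis i 1))"
      by (rule smooth_alg.add[OF smooth_alg.gen[OF mu] smooth_alg.mult[OF smooth_alg.const smooth_alg.inner]])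
    then show ?thesis by (simp add: cart_eq_inner_axis)
  qed
  have inv_sq: "smooth_alg ?S G (\<lambda>y. inverse ((mu y k - y $ i)^2))" for i
  proof -
    have "\<forall>y\<in>?S. (mu y k - y $ i) * (mu y k - y $ i) \<noteq> 0"
      using mu_not_root[OF _ k] by simp
    then have "smooth_alg ?S G (\<lambda>y. inverse ((mu y k - y $ i) * (mu y k - y $ i)))"
      by (rule smooth_alg.inverse[OF smooth_alg.mult[OF diff diff]])
    then show ?thesis by (simp add: power2_eq_square)
  qed
  have "\<forall>y\<in>?S. (\<Sum>i\<in>UNIV. inverse ((mu y k - y $ i)^2)) \<noteq> 0"
  proof
    fix y assume "y \<in> ?S"
    then have "(\<Sum>i\<in>UNIV. inverse ((mu y k - y $ i)^2)) > 0"
      using mu_not_root[OF _ k] by (intro sum_pos) auto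
    then show "(\<Sum>i\<in>UNIV. inverse ((mu y k - y $ i)^2)) \<noteq> 0" by simp
  qed
  then have "smooth_alg ?S G (\<lambda>y. inverse (\<Sum>i\<in>UNIV. inverse ((mu y k - y $ i)^2)))"
    by (rule smooth_alg.inverse[OF smooth_alg_sum[OF finite inv_sq]])
  then show ?thesis
    unfolding Wmat_def divide_inverse by (rule smooth_alg.mult[OF inv_sq])
qed

text \<open>The partial derivatives of the \<open>\<mu>\<^sub>k\<close> are rational in \<open>\<lambda>\<close> and the \<open>\<mu>\<^sub>k\<close> themselves.\<close>
lemma smooth_on_mu:
  assumes k: "1 \<le> k" "k < CARD('n)"
  shows "smooth_on (decr_tuples :: (real^'n::{finite,linorder}) set) (\<lambda>y. mu y k)"
proof (rule smooth_on_smooth_alg)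
  let ?G = "{(\<lambda>y :: real^'n::{finite,linorder}. mu y k) | k. 1 \<le> k \<and> k < CARD('n)}"
  show "smooth_alg decr_tuples ?G (\<lambda>y. mu y k)" using k by (intro smooth_alg.gen) auto
  show "\<exists>g. has_partials_on decr_tuples f g \<and> (\<forall>b\<in>Basis. smooth_alg decr_tuples ?G (g b))"
    if "f \<in> ?G" for f
  proof -
    from that obtain l where l: "1 \<le> l" "l < CARD('n)" and f: "f = (\<lambda>y. mu y l)" by blast
    have "has_partials_on decr_tuples f (\<lambda>b y. \<Sum>j\<in>UNIV. b $ j * Wmat y l j)"
      unfolding f by (intro has_partials_on_cart mu_has_derivative l)
    moreover have "smooth_alg decr_tuples ?G (\<lambda>y. \<Sum>j\<in>UNIV. b $ j * Wmat y l j)" for b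
      using l by (intro smooth_alg_sum smooth_alg.mult smooth_alg.const smooth_alg_Wmat) auto
    ultimately show ?thesis by blast
  qed
qed

theorem mainTheorem4:
  fixes D :: "(real^'n::{finite,linorder}) set"
  defines "D \<equiv> decr_tuples"
  assumes "CARD('n) \<ge> 2"
  shows "(\<forall>k\<in>{1..CARD('n)-1}. smooth_on D (\<lambda>x. mu x k))
    \<and> (\<forall>x\<in>D. \<forall>k\<in>{1..CARD('n)-1}.
          ((\<lambda>y. mu y k) has_derivative (\<lambda>h. \<Sum>j\<in>UNIV. Wmat x k j * h $ j)) (at x)
        \<and> (\<forall>j. Wmat x k j > 0)
        \<and> (\<Sum>j\<in>UNIV. Wmat x k j) = 1
        \<and> mu x k = (\<Sum>j\<in>UNIV. Wmat x k j * x $ j))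
    \<and> (\<forall>x\<in>D. \<forall>j.
          (\<Sum>k=1..CARD('n)-1. Wmat x k j) = real (CARD('n) - 1) / real (CARD('n)))"
proof -
  have range: "{1..CARD('n)-1} = {1..<CARD('n)}" by auto
  show ?thesis
    unfolding range D_def
    by (intro conjI ballI allI sum_Wmat_column[OF _ assms(2)])
      (simp_all add: smooth_on_mu mu_has_derivative Wmat_pos sum_Wmat_row mu_eq_sum_Wmat)
qed

end
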